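(* Let $K$ be a valued field, $d\ge1$, and $C\subseteq K^d$ convex. Then $C$ is an open subset of its affine span $\operatorname{aff}(C)$ (with the subspace topology induced by the valuation topology on $K^d$). Consequently, every convex subset of $K^d$ is closed in $K^d$.
   Context: $K$ is a field with a valuation $\nu:K\to\Gamma\cup\{\infty\}$, valuation ring $\mathcal{O}$. A set $X\subseteq K^d$ is convex if it is closed under combinations $\sum_{i=1}^n\alpha_ix_i$ with $x_i\in X$, $\alpha_i\in\mathcal{O}$, $\sum\alpha_i=1$. On $K^d$ put $\nu(x_1,\dots,x_d)=\min_i\nu(x_i)$; the valuation topology on $K^d$ has as basis the balls $\{x:\nu(x-c)>r\}$ ($c\in K^d$, $r\in\Gamma$), equivalently it is the product topology of the valuation topology on $K$. The affine span $\operatorname{aff}(X)$ is $\{\sum_{i=1}^n\alpha_ix_i: x_i\in X,\alpha_i\in K,\sum\alpha_i=1\}$. *)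

theory Defs
  imports "HOL-Analysis.Analysis"
begin

text \<open>The value nu(0) = infinity is left implicit: v is only constrained on nonzero
  elements, and "nu(x) > r" is rendered as "x = 0 \<or> v x > r".\<close>
definition valuation :: "('k::field \<Rightarrow> 'g::linordered_ab_group_add) \<Rightarrow> bool" where
  "valuation v \<longleftrightarrow>
     (\<forall>x y. x \<noteq> 0 \<longrightarrow> y \<noteq> 0 \<longrightarrow> v (x * y) = v x + v y) \<and>
     (\<forall>x y. x \<noteq> 0 \<longrightarrow> y \<noteq> 0 \<longrightarrow> x + y \<noteq> 0 \<longrightarrow> min (v x) (v y) \<le> v (x + y))"

definition val_ring :: "('k::field \<Rightarrow> 'g::linordered_ab_group_add) \<Rightarrow> 'k set" where
  "val_ring v = {a. a = 0 \<or> 0 \<le> v a}"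

definition smul :: "'k::times \<Rightarrow> 'k^'n \<Rightarrow> 'k^'n" where
  "smul a x = (\<chi> i. a * x $ i)"

definition val_convex :: "('k::field \<Rightarrow> 'g::linordered_ab_group_add) \<Rightarrow> ('k^'n) set \<Rightarrow> bool" where
  "val_convex v X \<longleftrightarrow>
     (\<forall>(m::nat) (x::nat \<Rightarrow> 'k^'n) (\<alpha>::nat \<Rightarrow> 'k).
        (\<forall>i<m. x i \<in> X) \<and> (\<forall>i<m. \<alpha> i \<in> val_ring v) \<and> (\<Sum>i<m. \<alpha> i) = 1
        \<longrightarrow> (\<Sum>i<m. smul (\<alpha> i) (x i)) \<in> X)"

definition aff :: "('k::field^'n) set \<Rightarrow> ('k^'n) set" where
  "aff X = {y. \<exists>(m::nat) (x::nat \<Rightarrow> 'k^'n) (\<alpha>::nat \<Rightarrow> 'k).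
              (\<forall>i<m. x i \<in> X) \<and> (\<Sum>i<m. \<alpha> i) = 1 \<and> y = (\<Sum>i<m. smul (\<alpha> i) (x i))}"

text \<open>Open ball {x. nu(x - c) > r}, with nu(x) = min_i nu(x_i).\<close>
definition vball :: "('k::field \<Rightarrow> 'g::linordered_ab_group_add) \<Rightarrow> 'k^'n \<Rightarrow> 'g \<Rightarrow> ('k^'n) set" where
  "vball v c r = {x. \<forall>i. x $ i - c $ i = 0 \<or> r < v (x $ i - c $ i)}"

definition val_topology :: "('k::field \<Rightarrow> 'g::linordered_ab_group_add) \<Rightarrow> ('k^'n) topology" where
  "val_topology v = topology (\<lambda>U. \<forall>c\<in>U. \<exists>r. vball v c r \<subseteq> U)"

end

theory Submission
  imports Defs
begin

text \<open>Translating C by one of its points c turns it into an \<O>-submodule M of K^d, and aff C - c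
  into a subset of K\<cdot>M = {am | a \<in> K, m \<in> M}. By induction on the coordinates, an \<O>-submodule M
  contains every sufficiently small element of K\<cdot>M; this is openness of C in aff C.
  For closedness, let y \<notin> C, w = y - c and N = M + \<O>w, and fix a0 with \<nu>(a0) < 0 (if there is
  none, the topology is discrete). If x \<in> C is close enough to y, then a0(x - y) is a small element
  of K\<cdot>N, hence a0(x - y) = m' + bw with m' \<in> M and b \<in> \<O>. As a0 + b \<noteq> 0, this puts w in K\<cdot>M;
  then y - x = w - (x - c), being small and in K\<cdot>M, lies in M, whence y \<in> C.\<close>

lemma valuation_mult: "valuation v \<Longrightarrow> x \<noteq> 0 \<Longrightarrow> y \<noteq> 0 \<Longrightarrow> v (x * y) = v x + v y"
  unfolding valuation_def by blast

lemma valuation_add: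
  "valuation v \<Longrightarrow> x \<noteq> 0 \<Longrightarrow> y \<noteq> 0 \<Longrightarrow> x + y \<noteq> 0 \<Longrightarrow> min (v x) (v y) \<le> v (x + y)"
  unfolding valuation_def by blast

lemma valuation_one: "valuation v \<Longrightarrow> v 1 = 0"
  using valuation_mult[of v 1 1] by simp

lemma valuation_minus_one: "valuation v \<Longrightarrow> v (-1) = 0"
  using valuation_mult[of v "-1" "-1"] valuation_one[of v] by simp

lemma valuation_minus: "valuation v \<Longrightarrow> v (- x) = v x"
  using valuation_mult[of v "-1" x] valuation_minus_one[of v] by (cases "x = 0") auto

lemma valuation_inverse: "valuation v \<Longrightarrow> x \<noteq> 0 \<Longrightarrow> v (inverse x) = - v x"
  using valuation_mult[of v x "inverse x"] valuation_one[of v] by (simp add: eq_neg_iff_add_eq_0 add.commute)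

lemma valuation_divide: "valuation v \<Longrightarrow> x \<noteq> 0 \<Longrightarrow> y \<noteq> 0 \<Longrightarrow> v (x / y) = v x - v y"
  using valuation_mult[of v x "inverse y"] valuation_inverse[of v y] by (simp add: divide_inverse)

lemma valuation_add_gt:
  assumes "valuation v" "x = 0 \<or> r < v x" "y = 0 \<or> r < v y"
  shows "x + y = 0 \<or> r < v (x + y)"
proof (cases "x = 0 \<or> y = 0 \<or> x + y = 0")
  case False
  then have "r < min (v x) (v y)" using assms by simp
  also have "\<dots> \<le> v (x + y)" using False valuation_add[OF assms(1)] by blast
  finally show ?thesis ..
qed (use assms in auto)

lemma val_ring_one: "valuation v \<Longrightarrow> 1 \<in> val_ring v"
  by (simp add: val_ring_def valuation_one)

lemma val_ring_uminus: "valuation v \<Longrightarrow> a \<in> val_ring v \<Longrightarrow> - a \<in> val_ring v"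
  by (simp add: val_ring_def valuation_minus)

lemma val_ring_add: "valuation v \<Longrightarrow> a \<in> val_ring v \<Longrightarrow> b \<in> val_ring v \<Longrightarrow> a + b \<in> val_ring v"
proof -
  assume val: "valuation v" and ab: "a \<in> val_ring v" "b \<in> val_ring v"
  show ?thesis
  proof (cases "a = 0 \<or> b = 0 \<or> a + b = 0")
    case False
    then have "0 \<le> min (v a) (v b)" using ab by (simp add: val_ring_def)
    also have "\<dots> \<le> v (a + b)" using False valuation_add[OF val] by blast
    finally show ?thesis by (simp add: val_ring_def)
  qed (use ab in \<open>auto simp: val_ring_def\<close>)
qed

lemma val_ring_diff: "valuation v \<Longrightarrow> a \<in> val_ring v \<Longrightarrow> b \<in> val_ring v \<Longrightarrow> a - b \<in> val_ring v"
  using val_ring_add[of v a "- b"] val_ring_uminus[of v b] by simp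

lemma val_ring_mult: "valuation v \<Longrightarrow> a \<in> val_ring v \<Longrightarrow> b \<in> val_ring v \<Longrightarrow> a * b \<in> val_ring v"
proof -
  assume val: "valuation v" and ab: "a \<in> val_ring v" "b \<in> val_ring v"
  show ?thesis
  proof (cases "a = 0 \<or> b = 0")
    case False
    then have "0 \<le> v a + v b" using ab by (simp add: val_ring_def add_nonneg_nonneg)
    then show ?thesis using False valuation_mult[OF val] by (simp add: val_ring_def)
  qed (auto simp: val_ring_def)
qed

lemma smul_component [simp]: "smul a x $ i = a * x $ i"
  by (simp add: smul_def)

lemma smul_zero_left [simp]: "smul 0 (x::'k::field^'n) = 0"
  and smul_one_left [simp]: "smul 1 x = x"
  and smul_zero_right [simp]: "smul a (0::'k::field^'n) = 0"
  and smul_smul [simp]: "smul a (smul b x) = smul (a * b) x"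
  and smul_add_right: "smul a (x + y) = smul a x + smul a y"
  and smul_add_left: "smul (a + b) x = smul a x + smul b x"
  and smul_minus_one: "smul (-1) x = - x"
  by (simp_all add: vec_eq_iff algebra_simps)

lemma mem_vball_iff_diff: "x \<in> vball v c r \<longleftrightarrow> x - c \<in> vball v 0 r"
  by (simp add: vball_def)

lemma vball_center: "c \<in> vball v c r"
  by (simp add: vball_def)

lemma vball_antimono: "r1 \<le> r2 \<Longrightarrow> vball v c r2 \<subseteq> vball v c r1"
  unfolding vball_def using order_le_less_trans by blast

lemma vball_zero_add:
  "valuation v \<Longrightarrow> x \<in> vball v 0 r \<Longrightarrow> y \<in> vball v 0 r \<Longrightarrow> x + y \<in> vball v 0 r"
  unfolding vball_def by (simp add: valuation_add_gt)

lemma vball_zero_uminus: "valuation v \<Longrightarrow> - x \<in> vball v 0 r \<longleftrightarrow> x \<in> vball v 0 r"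
  unfolding vball_def by (simp add: valuation_minus)

lemma vball_zero_diff:
  "valuation v \<Longrightarrow> x \<in> vball v 0 r \<Longrightarrow> y \<in> vball v 0 r \<Longrightarrow> x - y \<in> vball v 0 r"
  using vball_zero_add[of v x r "- y"] vball_zero_uminus[of v y r] by simp

lemma smul_in_vball_zero:
  assumes "valuation v" "b = 0 \<or> s < v b" "\<forall>i. m $ i \<noteq> 0 \<longrightarrow> \<mu> \<le> v (m $ i)"
  shows "smul b m \<in> vball v 0 (s + \<mu>)"
  unfolding vball_def
proof (intro CollectI allI)
  fix i
  have "s + \<mu> < v (b * m $ i)" if "b \<noteq> 0" "m $ i \<noteq> 0"
    using assms that valuation_mult[of v b "m $ i"] by (auto intro!: add_less_le_mono)
  then show "smul b m $ i - 0 $ i = 0 \<or> s + \<mu> < v (smul b m $ i - 0 $ i)"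
    by auto
qed

lemma smul_vball_zero:
  assumes "valuation v" "a \<noteq> 0" "x \<in> vball v 0 r"
  shows "smul a x \<in> vball v 0 (v a + r)"
  unfolding vball_def
proof (intro CollectI allI)
  fix i
  have "v a + r < v (a * x $ i)" if "x $ i \<noteq> 0"
    using assms that valuation_mult[of v a "x $ i"] by (auto simp: vball_def intro!: add_strict_left_mono)
  then show "smul a x $ i - 0 $ i = 0 \<or> v a + r < v (smul a x $ i - 0 $ i)" by auto
qed

lemma vector_valuation_lower_bound:
  fixes v :: "'k::field \<Rightarrow> 'g::linordered_ab_group_add"
  shows "\<exists>\<mu>. \<forall>i. (m::'k::field^'n) $ i \<noteq> 0 \<longrightarrow> \<mu> \<le> v (m $ i)"
proof (cases "{i. m $ i \<noteq> 0} = {}")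
  case False
  then show ?thesis by (intro exI[of _ "Min ((\<lambda>i. v (m $ i)) ` {i. m $ i \<noteq> 0})"]) auto
qed auto

definition val_submodule :: "('k::field \<Rightarrow> 'g::linordered_ab_group_add) \<Rightarrow> ('k^'n) set \<Rightarrow> bool" where
  "val_submodule v M \<longleftrightarrow>
     0 \<in> M \<and> (\<forall>x\<in>M. \<forall>y\<in>M. x + y \<in> M) \<and> (\<forall>a\<in>val_ring v. \<forall>x\<in>M. smul a x \<in> M)"

text \<open>K\<cdot>M; for an \<O>-submodule M this is the K-linear span of M (see \<open>kspan_add\<close>).\<close>
definition kspan :: "('k::field^'n) set \<Rightarrow> ('k^'n) set" where
  "kspan M = {smul a m | a m. m \<in> M}"

lemma val_submodule_zero: "val_submodule v M \<Longrightarrow> 0 \<in> M"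
  and val_submodule_add: "val_submodule v M \<Longrightarrow> x \<in> M \<Longrightarrow> y \<in> M \<Longrightarrow> x + y \<in> M"
  and val_submodule_smul: "val_submodule v M \<Longrightarrow> a \<in> val_ring v \<Longrightarrow> x \<in> M \<Longrightarrow> smul a x \<in> M"
  by (simp_all add: val_submodule_def)

lemma val_submodule_slice: "val_submodule v M \<Longrightarrow> val_submodule v {m \<in> M. m $ j = 0}"
  by (simp add: val_submodule_def)

lemma subset_kspan: "M \<subseteq> kspan M"
  unfolding kspan_def by (force intro: exI[of _ 1])

lemma kspan_smul: "x \<in> kspan M \<Longrightarrow> smul a x \<in> kspan M"
  unfolding kspan_def by force

lemma kspan_subset_zero: "M \<subseteq> {0} \<Longrightarrow> kspan M \<subseteq> {0}"
  unfolding kspan_def by auto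

text \<open>Of two multiples a\<cdot>m and b\<cdot>m', factor out the coefficient of smaller valuation.\<close>
lemma kspan_add:
  assumes val: "valuation v" and M: "val_submodule v M"
    and x: "x \<in> kspan M" and y: "y \<in> kspan M"
  shows "x + y \<in> kspan M"
proof -
  obtain a b m m' where m: "m \<in> M" "m' \<in> M" and xy: "x = smul a m" "y = smul b m'"
    using x y unfolding kspan_def by blast
  show ?thesis
  proof (cases "a = 0 \<or> b = 0")
    case True
    then show ?thesis using x y xy by auto
  next
    case False
    show ?thesis
    proof (cases "v a \<le> v b")
      case True
      have "b / a \<in> val_ring v" using valuation_divide[OF val] False True by (simp add: val_ring_def)
      then have "m + smul (b / a) m' \<in> M" using M m by (simp add: val_submodule_add val_submodule_smul)
      moreover have "x + y = smul a (m + smul (b / a) m')"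
        using False by (simp add: xy smul_add_right)
      ultimately show ?thesis unfolding kspan_def by blast
    next
      case nle: False
      have "a / b \<in> val_ring v" using valuation_divide[OF val] False nle by (simp add: val_ring_def)
      then have "smul (a / b) m + m' \<in> M" using M m by (simp add: val_submodule_add val_submodule_smul)
      moreover have "x + y = smul b (smul (a / b) m + m')"
        using False by (simp add: xy smul_add_right)
      ultimately show ?thesis unfolding kspan_def by blast
    qed
  qed
qed

lemma kspan_diff:
  "valuation v \<Longrightarrow> val_submodule v M \<Longrightarrow> x \<in> kspan M \<Longrightarrow> y \<in> kspan M \<Longrightarrow> x - y \<in> kspan M"
  using kspan_add[of v M x "smul (-1) y"] kspan_smul[of y M "-1"] by (simp add: smul_minus_one)

lemma kspan_sum:
  fixes k :: nat
  assumes "valuation v" "val_submodule v M" "\<forall>i<k. x i \<in> M"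
  shows "(\<Sum>i<k. smul (\<alpha> i) (x i)) \<in> kspan M"
  using assms(3)
proof (induction k)
  case 0
  then show ?case using val_submodule_zero[OF assms(2)] subset_kspan by auto
next
  case (Suc k)
  then have "smul (\<alpha> k) (x k) \<in> kspan M" using kspan_smul subset_kspan by blast
  then show ?case using Suc kspan_add[OF assms(1,2)] by simp
qed

lemma kspan_slice:
  assumes "0 \<in> M" "y \<in> kspan M" "y $ j = 0"
  shows "y \<in> kspan {m \<in> M. m $ j = 0}"
proof -
  obtain a m where m: "m \<in> M" "y = smul a m" using assms(2) unfolding kspan_def by blast
  show ?thesis
  proof (cases "a = 0")
    case True
    then show ?thesis using assms(1) m(2) subset_kspan[of "{m \<in> M. m $ j = 0}"] by auto
  next
    case False
    then show ?thesis using m assms(3) unfolding kspan_def by auto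
  qed
qed

lemma small_coordinate_quotient:
  assumes val: "valuation v" and y: "y $ j \<noteq> 0" and m0: "m0 $ j \<noteq> 0"
    and \<mu>: "\<forall>i. m0 $ i \<noteq> 0 \<longrightarrow> \<mu> \<le> v (m0 $ i)"
    and small: "y \<in> vball v 0 (max r' (max (v (m0 $ j)) (r' + v (m0 $ j) - \<mu>)))"
  shows "y $ j / m0 $ j \<in> val_ring v \<and> smul (y $ j / m0 $ j) m0 \<in> vball v 0 r'"
proof
  define r where "r = max r' (max (v (m0 $ j)) (r' + v (m0 $ j) - \<mu>))"
  have "r < v (y $ j)" using small y unfolding r_def vball_def by auto
  then have vb: "r - v (m0 $ j) < v (y $ j / m0 $ j)"
    using valuation_divide[OF val y m0] by (simp add: diff_strict_right_mono)
  have "0 \<le> r - v (m0 $ j)" unfolding r_def by (simp add: le_max_iff_disj)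
  then show "y $ j / m0 $ j \<in> val_ring v"
    using vb less_imp_le order_trans unfolding val_ring_def by blast
  have "r' + v (m0 $ j) - \<mu> \<le> r" unfolding r_def by (simp add: le_max_iff_disj)
  then have "r' \<le> r - v (m0 $ j) + \<mu>" by (simp add: algebra_simps)
  moreover have "smul (y $ j / m0 $ j) m0 \<in> vball v 0 (r - v (m0 $ j) + \<mu>)"
    using smul_in_vball_zero[OF val _ \<mu>] vb by blast
  ultimately show "smul (y $ j / m0 $ j) m0 \<in> vball v 0 r'" using vball_antimono by blast
qed

lemma small_kspan_subset_step:
  assumes val: "valuation v" and M: "val_submodule v M"
    and slice: "kspan {m \<in> M. m $ j = 0} \<inter> vball v 0 r' \<subseteq> {m \<in> M. m $ j = 0}"
  shows "\<exists>r. kspan M \<inter> vball v 0 r \<subseteq> M"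
proof -
  have in_slice: "y \<in> M" if "y \<in> kspan M" "y $ j = 0" "y \<in> vball v 0 r'" for y
    using kspan_slice[OF val_submodule_zero[OF M] that(1,2)] that(3) slice by blast
  show ?thesis
  proof (cases "\<forall>m\<in>M. m $ j = 0")
    case True
    have "y $ j = 0" if "y \<in> kspan M" for y
      using that True unfolding kspan_def by auto
    then show ?thesis using in_slice by blast
  next
    case False
    then obtain m0 where m0: "m0 \<in> M" "m0 $ j \<noteq> 0" by blast
    obtain \<mu> where \<mu>: "\<forall>i. m0 $ i \<noteq> 0 \<longrightarrow> \<mu> \<le> v (m0 $ i)"
      using vector_valuation_lower_bound by blast
    define r where "r = max r' (max (v (m0 $ j)) (r' + v (m0 $ j) - \<mu>))"
    have "kspan M \<inter> vball v 0 r \<subseteq> M"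
    proof
      fix y assume y: "y \<in> kspan M \<inter> vball v 0 r"
      have yr': "y \<in> vball v 0 r'" using y vball_antimono[of r' r] unfolding r_def by auto
      show "y \<in> M"
      proof (cases "y $ j = 0")
        case True
        then show ?thesis using in_slice y yr' by blast
      next
        case False
        define b where "b = y $ j / m0 $ j"
        have b: "b \<in> val_ring v" and bm0: "smul b m0 \<in> vball v 0 r'"
          using small_coordinate_quotient[OF val False m0(2) \<mu>] y unfolding b_def r_def by auto
        define z where "z = y - smul b m0"
        have "z \<in> kspan M"
          using kspan_diff[OF val M] y kspan_smul subset_kspan m0(1) unfolding z_def by blast
        moreover have "z $ j = 0" using m0(2) unfolding z_def b_def by simp
        moreover have "z \<in> vball v 0 r'" using vball_zero_diff[OF val yr' bm0] unfolding z_def .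
        ultimately have "z \<in> M" using in_slice by blast
        then have "z + smul b m0 \<in> M" using M b m0(1) by (simp add: val_submodule_add val_submodule_smul)
        then show ?thesis unfolding z_def by simp
      qed
    qed
    then show ?thesis by blast
  qed
qed

lemma small_kspan_subset_of_support:
  assumes val: "valuation v" and "finite S"
  shows "val_submodule v M \<Longrightarrow> \<forall>m\<in>M. \<forall>i. i \<notin> S \<longrightarrow> m $ i = 0 \<Longrightarrow>
    \<exists>r. kspan M \<inter> vball v 0 r \<subseteq> M"
  using \<open>finite S\<close>
proof (induction S arbitrary: M rule: finite_induct)
  case empty
  then have "M \<subseteq> {0}" by (auto simp: vec_eq_iff)
  then show ?case using kspan_subset_zero val_submodule_zero[OF empty(1)] by blast
next
  case (insert j S M)
  have "\<forall>m\<in>{m \<in> M. m $ j = 0}. \<forall>i. i \<notin> S \<longrightarrow> m $ i = 0"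
    using insert.prems(2) by auto
  then obtain r' where "kspan {m \<in> M. m $ j = 0} \<inter> vball v 0 r' \<subseteq> {m \<in> M. m $ j = 0}"
    using insert.IH val_submodule_slice[OF insert.prems(1)] by blast
  then show ?case using small_kspan_subset_step[OF val insert.prems(1)] by blast
qed

theorem val_submodule_contains_small_kspan:
  fixes M :: "('k::field^'n) set"
  assumes "valuation v" "val_submodule v M"
  shows "\<exists>r. kspan M \<inter> vball v 0 r \<subseteq> M"
  using small_kspan_subset_of_support[OF assms(1) _ assms(2), of UNIV] by simp

lemma val_convexD:
  fixes m :: nat
  shows "val_convex v C \<Longrightarrow> \<forall>i<m. x i \<in> C \<Longrightarrow> \<forall>i<m. \<alpha> i \<in> val_ring v \<Longrightarrow> (\<Sum>i<m. \<alpha> i) = 1 \<Longrightarrow>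
    (\<Sum>i<m. smul (\<alpha> i) (x i)) \<in> C"
  unfolding val_convex_def by blast

lemma val_convex_combination3:
  assumes "val_convex v C" "p \<in> C" "q \<in> C" "u \<in> C"
    and "a \<in> val_ring v" "b \<in> val_ring v" "e \<in> val_ring v" "a + b + e = 1"
  shows "smul a p + smul b q + smul e u \<in> C"
proof -
  let ?x = "\<lambda>i::nat. if i = 0 then p else if i = 1 then q else u"
  let ?\<alpha> = "\<lambda>i::nat. if i = 0 then a else if i = 1 then b else e"
  have "(\<Sum>i<Suc (Suc (Suc 0)). smul (?\<alpha> i) (?x i)) \<in> C"
    by (rule val_convexD[OF assms(1)]) (use assms in \<open>auto simp: less_Suc_eq\<close>)
  then show ?thesis by simp
qed

lemma val_convex_translate_submodule:
  assumes val: "valuation v" and C: "val_convex v C" and c: "c \<in> C"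
  shows "val_submodule v ((\<lambda>x. x - c) ` C)"
  unfolding val_submodule_def
proof (intro conjI ballI)
  show "0 \<in> (\<lambda>x. x - c) ` C" using c by force
next
  fix x y assume "x \<in> (\<lambda>x. x - c) ` C" "y \<in> (\<lambda>x. x - c) ` C"
  then obtain p q where pq: "p \<in> C" "q \<in> C" "x = p - c" "y = q - c" by blast
  have "smul 1 p + smul 1 q + smul (-1) c \<in> C"
    by (rule val_convex_combination3[OF C pq(1,2) c val_ring_one[OF val] val_ring_one[OF val]
      val_ring_uminus[OF val val_ring_one[OF val]]]) simp
  moreover have "x + y = (smul 1 p + smul 1 q + smul (-1) c) - c"
    using pq by (simp add: smul_minus_one)
  ultimately show "x + y \<in> (\<lambda>x. x - c) ` C" by blast
next
  fix a x assume a: "a \<in> val_ring v" and "x \<in> (\<lambda>x. x - c) ` C"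
  then obtain p where p: "p \<in> C" "x = p - c" by blast
  have "smul a p + smul (1 - a) c + smul 0 c \<in> C"
    using val_convex_combination3[OF C p(1) c c a val_ring_diff[OF val val_ring_one[OF val] a]]
    by (simp add: val_ring_def)
  moreover have "smul a x = (smul a p + smul (1 - a) c + smul 0 c) - c"
    unfolding p(2) by (simp add: vec_eq_iff algebra_simps)
  ultimately show "smul a x \<in> (\<lambda>x. x - c) ` C" by blast
qed

lemma subset_aff: "C \<subseteq> aff C"
proof
  fix x assume "x \<in> C"
  then show "x \<in> aff C" unfolding aff_def
    by (intro CollectI exI[of _ "Suc 0"] exI[of _ "\<lambda>_. x"] exI[of _ "\<lambda>_. 1"]) simp
qed

lemma affine_combination_diff:
  fixes k :: nat
  assumes "(\<Sum>i<k. \<alpha> i) = (1::'k::field)"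
  shows "(\<Sum>i<k. smul (\<alpha> i) (x i)) - c = (\<Sum>i<k. smul (\<alpha> i) (x i - (c::'k^'n)))"
proof -
  have "(\<Sum>i<k. \<alpha> i * c $ j) = c $ j" for j
    using assms by (simp add: sum_distrib_right[symmetric])
  then show ?thesis by (simp add: vec_eq_iff sum_component algebra_simps sum_subtractf)
qed

lemma aff_diff_in_kspan:
  assumes val: "valuation v" and C: "val_convex v C" and c: "c \<in> C" and y: "y \<in> aff C"
  shows "y - c \<in> kspan ((\<lambda>x. x - c) ` C)"
proof -
  obtain k :: nat and x \<alpha> where k: "\<forall>i<k. x i \<in> C" "(\<Sum>i<k. \<alpha> i) = 1"
      "y = (\<Sum>i<k. smul (\<alpha> i) (x i))"
    using y unfolding aff_def by blast
  then have "\<forall>i<k. x i - c \<in> (\<lambda>x. x - c) ` C" by blast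
  from kspan_sum[OF val val_convex_translate_submodule[OF val C c] this, of \<alpha>] show ?thesis
    using affine_combination_diff[OF k(2), of x c] k(3) by simp
qed

lemma val_convex_open_in_aff_at:
  assumes val: "valuation v" and C: "val_convex v C" and c: "c \<in> C"
  shows "\<exists>r. vball v c r \<inter> aff C \<subseteq> C"
proof -
  let ?M = "(\<lambda>x. x - c) ` C"
  obtain r where r: "kspan ?M \<inter> vball v 0 r \<subseteq> ?M"
    using val_submodule_contains_small_kspan[OF val val_convex_translate_submodule[OF val C c]] by blast
  have "y \<in> C" if "y \<in> vball v c r" "y \<in> aff C" for y
  proof -
    have "y - c \<in> ?M"
      using r aff_diff_in_kspan[OF val C c that(2)] that(1) mem_vball_iff_diff by blast
    then show ?thesis by auto
  qed
  then show ?thesis by blast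
qed

lemma vball_trivial_valuation:
  assumes val: "valuation v" and triv: "\<forall>a. a \<noteq> 0 \<longrightarrow> 0 \<le> v a"
  shows "vball v c 0 = {c}"
proof -
  have zero: "z = 0" if "z = 0 \<or> 0 < v z" for z
  proof (rule ccontr)
    assume "z \<noteq> 0"
    then have "0 < v z" "0 \<le> v (inverse z)" using that triv by auto
    then show False using valuation_inverse[OF val \<open>z \<noteq> 0\<close>] by simp
  qed
  have "x = c" if "x \<in> vball v c 0" for x
  proof -
    have "x $ i - c $ i = 0" for i using zero that unfolding vball_def by blast
    then show ?thesis by (simp add: vec_eq_iff)
  qed
  then show ?thesis using vball_center by blast
qed

lemma val_submodule_add_line:
  assumes val: "valuation v" and M: "val_submodule v M"
  shows "val_submodule v {m + smul b w | m b. m \<in> M \<and> b \<in> val_ring v}"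
  unfolding val_submodule_def
proof (intro conjI ballI)
  show "0 \<in> {m + smul b w | m b. m \<in> M \<and> b \<in> val_ring v}"
    using val_submodule_zero[OF M] by (force simp: val_ring_def)
next
  fix x z assume "x \<in> {m + smul b w | m b. m \<in> M \<and> b \<in> val_ring v}"
    "z \<in> {m + smul b w | m b. m \<in> M \<and> b \<in> val_ring v}"
  then obtain m1 b1 m2 b2 where "x = m1 + smul b1 w" "z = m2 + smul b2 w" "m1 \<in> M" "m2 \<in> M"
      "b1 \<in> val_ring v" "b2 \<in> val_ring v"
    by blast
  moreover have "x + z = (m1 + m2) + smul (b1 + b2) w"
    using calculation by (simp add: smul_add_left algebra_simps)
  ultimately show "x + z \<in> {m + smul b w | m b. m \<in> M \<and> b \<in> val_ring v}"
    using val_submodule_add[OF M] val_ring_add[OF val] by blast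
next
  fix a x assume a: "a \<in> val_ring v" and "x \<in> {m + smul b w | m b. m \<in> M \<and> b \<in> val_ring v}"
  then obtain m1 b1 where "x = m1 + smul b1 w" "m1 \<in> M" "b1 \<in> val_ring v" by blast
  moreover have "smul a x = smul a m1 + smul (a * b1) w"
    using calculation by (simp add: smul_add_right)
  ultimately show "smul a x \<in> {m + smul b w | m b. m \<in> M \<and> b \<in> val_ring v}"
    using val_submodule_smul[OF M a] val_ring_mult[OF val a] by blast
qed

lemma mem_kspan_if_close:
  assumes val: "valuation v" and M: "val_submodule v M"
    and a0: "a0 \<noteq> 0" "v a0 < 0"
    and N_def: "N = {m + smul b w | m b. m \<in> M \<and> b \<in> val_ring v}"
    and N: "kspan N \<inter> vball v 0 rN \<subseteq> N"
    and m: "m \<in> M" "m - w \<in> vball v 0 (rN - v a0)"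
  shows "w \<in> kspan M"
proof -
  have "m - w = m + smul (-1) w" by (simp add: smul_minus_one)
  then have "m - w \<in> N"
    unfolding N_def using m(1) val_ring_uminus[OF val val_ring_one[OF val]] by blast
  then have "smul a0 (m - w) \<in> kspan N" using kspan_smul subset_kspan by blast
  moreover have "smul a0 (m - w) \<in> vball v 0 rN"
    using smul_vball_zero[OF val a0(1) m(2)] by simp
  ultimately have "smul a0 (m - w) \<in> N" using N by blast
  then obtain m' b where m': "m' \<in> M" "b \<in> val_ring v" "smul a0 (m - w) = m' + smul b w"
    unfolding N_def by blast
  have "a0 + b \<noteq> 0"
  proof
    assume "a0 + b = 0"
    then have "b = - a0" by (simp add: eq_neg_iff_add_eq_0 add.commute)
    then show False using m'(2) a0 valuation_minus[OF val] by (simp add: val_ring_def)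
  qed
  have "smul (a0 + b) w = smul a0 m - m'"
    using m'(3) by (simp add: vec_eq_iff algebra_simps)
  also have "\<dots> \<in> kspan M"
    using kspan_diff[OF val M] kspan_smul[of m M a0] subset_kspan m(1) m'(1) by blast
  finally have "smul (inverse (a0 + b)) (smul (a0 + b) w) \<in> kspan M"
    by (rule kspan_smul)
  then show ?thesis using \<open>a0 + b \<noteq> 0\<close> by simp
qed

lemma val_convex_closed_at:
  assumes val: "valuation v" and C: "val_convex v C" and y: "y \<notin> C"
  shows "\<exists>r. vball v y r \<inter> C = {}"
proof (cases "C = {} \<or> (\<forall>a. a \<noteq> 0 \<longrightarrow> 0 \<le> v a)")
  case True
  moreover have "vball v y 0 \<inter> C = {}" if "\<forall>a. a \<noteq> 0 \<longrightarrow> 0 \<le> v a"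
    using vball_trivial_valuation[OF val that, of y] y by simp
  ultimately show ?thesis by auto
next
  case False
  then obtain a0 c where a0: "a0 \<noteq> 0" "v a0 < 0" and c: "c \<in> C" by (auto simp: not_le)
  define M where "M = (\<lambda>x. x - c) ` C"
  define w where "w = y - c"
  define N where "N = {m + smul b w | m b. m \<in> M \<and> b \<in> val_ring v}"
  have M_sub: "val_submodule v M"
    unfolding M_def by (rule val_convex_translate_submodule[OF val C c])
  obtain rM where rM: "kspan M \<inter> vball v 0 rM \<subseteq> M"
    using val_submodule_contains_small_kspan[OF val M_sub] by blast
  obtain rN where rN: "kspan N \<inter> vball v 0 rN \<subseteq> N"
    using val_submodule_contains_small_kspan[OF val val_submodule_add_line[OF val M_sub]]
    unfolding N_def by blast
  define r where "r = max rM (rN - v a0)"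
  have "x \<notin> C" if x: "x \<in> vball v y r" for x
  proof
    assume "x \<in> C"
    then have m: "x - c \<in> M" unfolding M_def by blast
    have "x - c - w = x - y" unfolding w_def by simp
    then have close: "x - c - w \<in> vball v 0 r" using x mem_vball_iff_diff by metis
    then have "x - c - w \<in> vball v 0 (rN - v a0)" using vball_antimono[of "rN - v a0" r]
      unfolding r_def by auto
    then have "w \<in> kspan M" by (rule mem_kspan_if_close[OF val M_sub a0 N_def rN m])
    then have "w - (x - c) \<in> kspan M" using kspan_diff[OF val M_sub] m subset_kspan by blast
    moreover have "w - (x - c) \<in> vball v 0 rM"
      using close vball_zero_uminus[OF val, of "w - (x - c)"] vball_antimono[of rM r]
      unfolding r_def by auto
    ultimately have "w - (x - c) + (x - c) \<in> M" using rM m val_submodule_add[OF M_sub] by blast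
    then show False using y unfolding M_def w_def by auto
  qed
  then show ?thesis by blast
qed

lemma istopology_vball: "istopology (\<lambda>U. \<forall>c\<in>U. \<exists>r. vball v (c::'k::field^'n) r \<subseteq> U)"
  unfolding istopology_def
proof (intro conjI allI impI)
  fix S T :: "('k::field^'n) set"
  assume S: "\<forall>c\<in>S. \<exists>r. vball v c r \<subseteq> S" and T: "\<forall>c\<in>T. \<exists>r. vball v c r \<subseteq> T"
  show "\<forall>c\<in>S \<inter> T. \<exists>r. vball v c r \<subseteq> S \<inter> T"
  proof
    fix c assume "c \<in> S \<inter> T"
    then obtain r1 r2 where "vball v c r1 \<subseteq> S" "vball v c r2 \<subseteq> T" using S T by blast
    then have "vball v c (max r1 r2) \<subseteq> S \<inter> T"
      using vball_antimono[of r1 "max r1 r2" v c] vball_antimono[of r2 "max r1 r2" v c] by auto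
    then show "\<exists>r. vball v c r \<subseteq> S \<inter> T" ..
  qed
next
  fix \<K> :: "('k^'n) set set"
  assume "\<forall>S\<in>\<K>. \<forall>c\<in>S. \<exists>r. vball v c r \<subseteq> S"
  then show "\<forall>c\<in>\<Union>\<K>. \<exists>r. vball v c r \<subseteq> \<Union>\<K>" by (meson Union_upper subset_trans UnionE)
qed

lemma openin_val_topology: "openin (val_topology v) U \<longleftrightarrow> (\<forall>c\<in>U. \<exists>r. vball v c r \<subseteq> U)"
  unfolding val_topology_def by (simp add: istopology_vball)

lemma topspace_val_topology: "topspace (val_topology v) = UNIV"
proof -
  have "openin (val_topology v) UNIV" by (simp add: openin_val_topology)
  then show ?thesis using openin_subset by blast
qed

lemma openin_vball: "valuation v \<Longrightarrow> openin (val_topology v) (vball v c r)"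
  unfolding openin_val_topology
proof
  fix x assume val: "valuation v" and x: "x \<in> vball v c r"
  have "vball v x r \<subseteq> vball v c r"
  proof
    fix y assume "y \<in> vball v x r"
    then have "(y - x) + (x - c) \<in> vball v 0 r"
      using vball_zero_add[OF val] x mem_vball_iff_diff[of y v x r] mem_vball_iff_diff[of x v c r]
      by blast
    then show "y \<in> vball v c r" using mem_vball_iff_diff[of y v c r] by simp
  qed
  then show "\<exists>r'. vball v x r' \<subseteq> vball v c r" by blast
qed

lemma openin_subtopology_val_topologyI:
  assumes "valuation v" "S \<subseteq> A" "\<forall>c\<in>S. \<exists>r. vball v c r \<inter> A \<subseteq> S"
  shows "openin (subtopology (val_topology v) A) S"
proof (subst openin_subopen, intro ballI)
  fix c assume c: "c \<in> S"
  then obtain r where "vball v c r \<inter> A \<subseteq> S" using assms(3) by blast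
  moreover have "openin (subtopology (val_topology v) A) (A \<inter> vball v c r)"
    by (rule openin_subtopology_Int2[OF openin_vball[OF assms(1)]])
  moreover have "c \<in> A \<inter> vball v c r" using c assms(2) vball_center by blast
  ultimately show "\<exists>T. openin (subtopology (val_topology v) A) T \<and> c \<in> T \<and> T \<subseteq> S"
    by (metis inf_commute)
qed

lemma closedin_val_topologyI:
  assumes "\<And>y. y \<notin> C \<Longrightarrow> \<exists>r. vball v y r \<inter> C = {}"
  shows "closedin (val_topology v) C"
proof -
  have "openin (val_topology v) (UNIV - C)"
    unfolding openin_val_topology using assms by blast
  then show ?thesis by (simp add: closedin_def topspace_val_topology)
qed

theorem proposition2p15:
  fixes v :: "'k::field \<Rightarrow> 'g::linordered_ab_group_add"
    and C :: "('k^'n) set"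
  assumes "valuation v"
    and "val_convex v C"
  shows "openin (subtopology (val_topology v) (aff C)) C \<and> closedin (val_topology v) C"
proof
  show "openin (subtopology (val_topology v) (aff C)) C"
    using val_convex_open_in_aff_at[OF assms]
    by (intro openin_subtopology_val_topologyI[OF assms(1) subset_aff]) blast
  show "closedin (val_topology v) C"
    using val_convex_closed_at[OF assms] by (rule closedin_val_topologyI)
qed

end
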